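(* Consider the Markov chain $X^N$ described in the context, its embedded jump chain $X^{J,N}$, and the random walk $W$ obtained as the jump process of the coordinate process $(X^{J,N}_1(l))_{l\ge 0}$. For any $k$, conditionally on $W(k)\neq 0$ and $W(k)\neq N$, we have $W(k+1)=W(k)+1$ with probability at least $\frac{p_1}{p_1+p_2}$, and $W(k+1)=W(k)-1$ otherwise.
   Context: Learning dynamics: there are $K\ge 2$ arms with Bernoulli reward parameters $1\ge p_1>p_2\ge\cdots\ge p_K\ge 0$, $N$ individuals, Poisson clock rate $\lambda>0$, and $\mu\in(0,1]$. $X^N(t)=(X^N_0(t),\dots,X^N_K(t))$ is the continuous-time Markov chain on nonnegative integer vectors summing to $N$ with $X^N(0)=(N,0,\dots,0)$, which from state $s$ jumps to $s+e^k$ at rate $s_0\lambda(\frac{\mu}{K}+(1-\mu)\frac{s_k}{N})p_k$ for $k=1,\dots,K$, and to $s+e^k-e^{k'}$ at rate $s_{k'}\lambda\frac{s_k}{N}p_k$ for distinct $k,k'\in\{1,\dots,K\}$ ($e^k$ the $k$-th unit vector, coordinates indexed from $0$); no other transitions occur. ($X^N_k(t)$ counts individuals whose memory equals arm $k$; $X^N_0$ counts individuals with no preference.) The jump chain $X^{J,N}(l)$, $l=0,1,2,\dots$, is the sequence of successive distinct states visited by $X^N$, with $X^{J,N}(0)=X^N(0)$. The process $W(k)$, $k=0,1,2,\dots$, is the jump process of the first coordinate $(X^{J,N}_1(l))_{l\ge0}$, i.e., the sequence of successive distinct values taken by $X^{J,N}_1$ (each move of $W$ is $\pm1$), with $W(0)=X^{J,N}_1(0)$.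 *)

theory Defs
  imports "HOL-Probability.Probability"
begin

text \<open>States are vectors s = (s_0,...,s_K) represented as functions nat => nat
  (coordinates above K are irrelevant and stay 0). Unit vector e^k:\<close>

definition unitv :: "nat \<Rightarrow> nat \<Rightarrow> nat" where
  "unitv k = (\<lambda>i. if i = k then 1 else 0)"

text \<open>s + e^k - e^k' (for k' = 0: an individual with no preference adopts arm k).\<close>
definition move :: "(nat \<Rightarrow> nat) \<Rightarrow> nat \<Rightarrow> nat \<Rightarrow> nat \<Rightarrow> nat" where
  "move s k k' = (\<lambda>i. s i + unitv k i - unitv k' i)"

definition rate :: "nat \<Rightarrow> nat \<Rightarrow> real \<Rightarrow> real \<Rightarrow> (nat \<Rightarrow> real)
    \<Rightarrow> (nat \<Rightarrow> nat) \<Rightarrow> (nat \<Rightarrow> nat) \<Rightarrow> real" where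
  "rate N K lam mu p s s' =
     (\<Sum>k\<in>{1..K}. if s' = move s k 0 then
        real (s 0) * lam * (mu / real K + (1 - mu) * real (s k) / real N) * p k else 0)
   + (\<Sum>k\<in>{1..K}. \<Sum>k'\<in>{1..K} - {k}. if s' = move s k k' then
        real (s k') * lam * (real (s k) / real N) * p k else 0)"

definition total_rate :: "nat \<Rightarrow> nat \<Rightarrow> real \<Rightarrow> real \<Rightarrow> (nat \<Rightarrow> real)
    \<Rightarrow> (nat \<Rightarrow> nat) \<Rightarrow> real" where
  "total_rate N K lam mu p s =
     (\<Sum>k\<in>{1..K}. real (s 0) * lam * (mu / real K + (1 - mu) * real (s k) / real N) * p k)
   + (\<Sum>k\<in>{1..K}. \<Sum>k'\<in>{1..K} - {k}. real (s k') * lam * (real (s k) / real N) * p k)"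

definition jump_prob :: "nat \<Rightarrow> nat \<Rightarrow> real \<Rightarrow> real \<Rightarrow> (nat \<Rightarrow> real)
    \<Rightarrow> (nat \<Rightarrow> nat) \<Rightarrow> (nat \<Rightarrow> nat) \<Rightarrow> real" where
  "jump_prob N K lam mu p s s' =
     (if total_rate N K lam mu p s = 0 then (if s' = s then 1 else 0)
      else rate N K lam mu p s s' / total_rate N K lam mu p s)"

definition init_state :: "nat \<Rightarrow> nat \<Rightarrow> nat" where
  "init_state N = (\<lambda>i. if i = 0 then N else 0)"

fun change_time :: "(nat \<Rightarrow> nat \<Rightarrow> nat) \<Rightarrow> nat \<Rightarrow> nat option" where
  "change_time x 0 = Some 0"
| "change_time x (Suc k) =
     (case change_time x k of None \<Rightarrow> None
      | Some t \<Rightarrow> if \<exists>l>t. x l 1 \<noteq> x t 1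
                  then Some (LEAST l. t < l \<and> x l 1 \<noteq> x t 1) else None)"

definition Wproc :: "(nat \<Rightarrow> nat \<Rightarrow> nat) \<Rightarrow> nat \<Rightarrow> nat option" where
  "Wproc x k = map_option (\<lambda>t. x t 1) (change_time x k)"

end

theory Submission
  imports Defs
begin

(*
  From a state with 0 < s_1 < N, coordinate 1 of the jump chain moves by at most one.
  It moves down only when an arm-1 individual switches to an arm k >= 2, at rate
  s_1 s_k lam p_k / N, while the reverse switch to arm 1 happens at rate s_k s_1 lam p_1 / N.
  Since p_k <= p_2, p_1 times the probability of a down-step is at most p_2 times the
  probability of an up-step, in every interior state. By the Markov property this inequality
  survives summation over the time t at which W reaches its k-th value and the number m of
  steps it then stays put. The up-step probability is bounded below on the finitely many
  interior states, so W leaves every interior value almost surely and the two events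
  "next move up" and "next move down" exhaust the conditioning event.
*)

locale finite_markov_chain = prob_space M
  for M :: "'w measure" +
  fixes S :: "'a set" and P :: "'a \<Rightarrow> 'a \<Rightarrow> real" and s0 :: 'a
    and X :: "nat \<Rightarrow> 'w \<Rightarrow> 'a"
  assumes finite_S: "finite S" and s0_in_S: "s0 \<in> S"
    and P_nonneg: "0 \<le> P s s'"
    and P_row_sum: "s \<in> S \<Longrightarrow> (\<Sum>s'\<in>S. P s s') = 1"
    and X_measurable: "X n \<in> measurable M (count_space UNIV)"
    and X_law: "measure M {\<omega> \<in> space M. \<forall>i\<le>n. X i \<omega> = xs i}
       = (if xs 0 = s0 then 1 else 0) * (\<Prod>i<n. P (xs i) (xs (Suc i)))"
begin

definition path_weight :: "nat \<Rightarrow> (nat \<Rightarrow> 'a) \<Rightarrow> real" where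
  "path_weight n xs = (if xs 0 = s0 then 1 else 0) * (\<Prod>i<n. P (xs i) (xs (Suc i)))"

definition cylinder :: "nat \<Rightarrow> (nat \<Rightarrow> 'a) \<Rightarrow> 'w set" where
  "cylinder n xs = {\<omega> \<in> space M. \<forall>i\<le>n. X i \<omega> = xs i}"

definition paths :: "nat \<Rightarrow> ((nat \<Rightarrow> 'a) \<Rightarrow> bool) \<Rightarrow> (nat \<Rightarrow> 'a) set" where
  "paths n Q = {xs \<in> PiE {..n} (\<lambda>_. S). Q xs}"

lemma path_weight_nonneg: "0 \<le> path_weight n xs"
  unfolding path_weight_def by (auto intro!: prod_nonneg P_nonneg)

lemma path_weight_Suc: "path_weight (Suc n) (xs(Suc n := s)) = path_weight n xs * P (xs n) s"
proof -
  have "(\<Prod>i<n. P ((xs(Suc n := s)) i) ((xs(Suc n := s)) (Suc i))) = (\<Prod>i<n. P (xs i) (xs (Suc i)))"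
    by (intro prod.cong) auto
  then show ?thesis unfolding path_weight_def by (simp add: prod.lessThan_Suc)
qed

lemma finite_paths: "finite (paths n Q)"
proof (rule finite_subset)
  show "paths n Q \<subseteq> PiE {..n} (\<lambda>_. S)" unfolding paths_def by blast
  show "finite (PiE {..n} (\<lambda>_. S))" using finite_S by (intro finite_PiE) auto
qed

lemma X_vimage_sets: "X i -` A \<inter> space M \<in> sets M"
  using measurable_sets[OF X_measurable] by simp

lemma cylinder_sets: "cylinder n xs \<in> events"
proof -
  have "cylinder n xs = (\<Inter>i\<in>{..n}. X i -` {xs i} \<inter> space M)"
    unfolding cylinder_def by auto
  also have "\<dots> \<in> events" by (intro sets.finite_INT X_vimage_sets) auto
  finally show ?thesis .
qed

lemma prob_cylinder: "prob (cylinder n xs) = path_weight n xs"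
  unfolding cylinder_def path_weight_def by (rule X_law)

lemma prob_UN_cylinder:
  assumes "F \<subseteq> PiE {..n} B" "finite F"
  shows "prob (\<Union>xs\<in>F. cylinder n xs) = (\<Sum>xs\<in>F. path_weight n xs)"
proof -
  have "disjoint_family_on (cylinder n) F"
  proof (unfold disjoint_family_on_def, intro ballI impI)
    fix xs ys assume "xs \<in> F" "ys \<in> F" "xs \<noteq> ys"
    then obtain i where "i \<le> n" "xs i \<noteq> ys i"
      using assms(1) PiE_ext[of xs "{..n}" B ys] by blast
    then show "cylinder n xs \<inter> cylinder n ys = {}" unfolding cylinder_def by auto
  qed
  then show ?thesis using assms(2) cylinder_sets
    by (simp add: finite_measure_finite_Union prob_cylinder subset_eq)
qed

lemma stays_in_S_eq_UN_cylinder: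
  assumes Q: "\<And>x y. (\<And>i. i \<le> n \<Longrightarrow> x i = y i) \<Longrightarrow> Q x = Q y"
  shows "{\<omega> \<in> space M. (\<forall>i\<le>n. X i \<omega> \<in> S) \<and> Q (\<lambda>i. X i \<omega>)} = (\<Union>xs\<in>paths n Q. cylinder n xs)"
proof (intro equalityI subsetI)
  fix \<omega> assume \<omega>: "\<omega> \<in> {\<omega> \<in> space M. (\<forall>i\<le>n. X i \<omega> \<in> S) \<and> Q (\<lambda>i. X i \<omega>)}"
  define xs where "xs = restrict (\<lambda>i. X i \<omega>) {..n}"
  have "Q xs" using \<omega> Q[of xs "\<lambda>i. X i \<omega>"] by (simp add: xs_def)
  then have "xs \<in> paths n Q" using \<omega> by (auto simp: paths_def xs_def)
  moreover have "\<omega> \<in> cylinder n xs" using \<omega> by (simp add: cylinder_def xs_def)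
  ultimately show "\<omega> \<in> (\<Union>xs\<in>paths n Q. cylinder n xs)" by blast
next
  fix \<omega> assume "\<omega> \<in> (\<Union>xs\<in>paths n Q. cylinder n xs)"
  then obtain xs where xs: "xs \<in> paths n Q" and \<omega>: "\<omega> \<in> cylinder n xs" by blast
  have "Q (\<lambda>i. X i \<omega>)" using xs \<omega> Q[of xs "\<lambda>i. X i \<omega>"] by (simp add: paths_def cylinder_def)
  then show "\<omega> \<in> {\<omega> \<in> space M. (\<forall>i\<le>n. X i \<omega> \<in> S) \<and> Q (\<lambda>i. X i \<omega>)}"
    using xs \<omega> by (auto simp: paths_def cylinder_def)
qed

lemma sum_path_weight_Suc:
  assumes Q: "\<And>x y. (\<And>i. i \<le> n \<Longrightarrow> x i = y i) \<Longrightarrow> Q x = Q y"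
  shows "(\<Sum>ys\<in>paths (Suc n) (\<lambda>ys. Q ys \<and> R (ys n) (ys (Suc n))). path_weight (Suc n) ys)
    = (\<Sum>xs\<in>paths n Q. path_weight n xs * (\<Sum>s\<in>{s\<in>S. R (xs n) s}. P (xs n) s))"
proof -
  let ?ext = "\<lambda>(xs, s). xs(Suc n := s)"
  let ?A = "Sigma (paths n Q) (\<lambda>xs. {s\<in>S. R (xs n) s})"
  have ext_Q: "Q (xs(Suc n := s)) = Q xs" for xs :: "nat \<Rightarrow> 'a" and s
    by (rule Q) simp
  have "PiE {..Suc n} (\<lambda>_. S) = (\<lambda>(s, xs). xs(Suc n := s)) ` (S \<times> PiE {..n} (\<lambda>_. S))"
    using PiE_insert_eq[of "Suc n" "{..n}" "\<lambda>_. S"] by (simp add: atMost_Suc)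
  then have image: "paths (Suc n) (\<lambda>ys. Q ys \<and> R (ys n) (ys (Suc n))) = ?ext ` ?A"
    unfolding paths_def by (auto simp: ext_Q)
  have inj: "inj_on ?ext ?A"
  proof (rule inj_onI)
    fix a b assume "a \<in> ?A" "b \<in> ?A" and eq: "?ext a = ?ext b"
    then obtain xs s ys t where ab: "a = (xs, s)" "b = (ys, t)"
      and xs: "xs \<in> PiE {..n} (\<lambda>_. S)" and ys: "ys \<in> PiE {..n} (\<lambda>_. S)"
      by (auto simp: paths_def)
    have upd: "xs(Suc n := s) = ys(Suc n := t)" using eq ab by simp
    have "xs i = ys i" if "i \<in> {..n}" for i
      using fun_cong[OF upd, of i] that by (simp split: if_splits)
    then have "xs = ys" by (rule PiE_ext[OF xs ys])
    moreover have "s = t" using fun_cong[OF upd, of "Suc n"] by simp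
    ultimately show "a = b" using ab by simp
  qed
  have "(\<Sum>ys\<in>paths (Suc n) (\<lambda>ys. Q ys \<and> R (ys n) (ys (Suc n))). path_weight (Suc n) ys)
      = (\<Sum>(xs, s)\<in>?A. path_weight n xs * P (xs n) s)"
    unfolding image sum.reindex[OF inj] by (intro sum.cong) (auto simp: path_weight_Suc)
  also have "\<dots> = (\<Sum>xs\<in>paths n Q. \<Sum>s\<in>{s\<in>S. R (xs n) s}. path_weight n xs * P (xs n) s)"
    using finite_paths finite_S by (subst sum.Sigma) auto
  finally show ?thesis by (simp add: sum_distrib_left)
qed

definition stays_in_S :: "nat \<Rightarrow> 'w set" where
  "stays_in_S n = {\<omega> \<in> space M. \<forall>i\<le>n. X i \<omega> \<in> S}"

lemma stays_in_S_sets: "stays_in_S n \<in> events"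
proof -
  have "stays_in_S n = (\<Inter>i\<in>{..n}. X i -` S \<inter> space M)"
    unfolding stays_in_S_def by auto
  also have "\<dots> \<in> events" by (intro sets.finite_INT X_vimage_sets) auto
  finally show ?thesis .
qed

lemma prob_paths:
  assumes Q: "\<And>x y. (\<And>i. i \<le> n \<Longrightarrow> x i = y i) \<Longrightarrow> Q x = Q y"
  shows "prob {\<omega> \<in> space M. (\<forall>i\<le>n. X i \<omega> \<in> S) \<and> Q (\<lambda>i. X i \<omega>)}
    = (\<Sum>xs\<in>paths n Q. path_weight n xs)"
proof -
  have "paths n Q \<subseteq> PiE {..n} (\<lambda>_. S)" by (auto simp: paths_def)
  then show ?thesis
    using stays_in_S_eq_UN_cylinder[of n Q, OF Q] prob_UN_cylinder[of "paths n Q" n, OF _ finite_paths]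
    by simp
qed

lemma prob_stays_in_S: "prob (stays_in_S n) = 1"
proof (induction n)
  case 0
  have "cylinder 0 (\<lambda>_. s0) \<subseteq> stays_in_S 0"
    unfolding cylinder_def stays_in_S_def using s0_in_S by auto
  then have "prob (cylinder 0 (\<lambda>_. s0)) \<le> prob (stays_in_S 0)"
    by (intro finite_measure_mono stays_in_S_sets)
  moreover have "prob (cylinder 0 (\<lambda>_. s0)) = 1"
    by (simp add: prob_cylinder path_weight_def)
  ultimately show ?case using prob_le_1[of "stays_in_S 0"] by simp
next
  case (Suc n)
  have "prob (stays_in_S (Suc n))
      = (\<Sum>ys\<in>paths (Suc n) (\<lambda>ys. True \<and> True). path_weight (Suc n) ys)"
    using prob_paths[of "Suc n" "\<lambda>_. True"] by (simp add: stays_in_S_def)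
  also have "\<dots> = (\<Sum>xs\<in>paths n (\<lambda>_. True). path_weight n xs * (\<Sum>s\<in>{s\<in>S. True}. P (xs n) s))"
    by (rule sum_path_weight_Suc) simp
  also have "\<dots> = (\<Sum>xs\<in>paths n (\<lambda>_. True). path_weight n xs)"
    by (intro sum.cong) (auto simp: paths_def P_row_sum PiE_iff)
  also have "\<dots> = prob (stays_in_S n)"
    using prob_paths[of n "\<lambda>_. True"] by (simp add: stays_in_S_def)
  finally show ?case using Suc.IH by simp
qed

lemma prob_inter_stays_in_S: "A \<in> events \<Longrightarrow> prob (A \<inter> stays_in_S n) = prob A"
proof -
  assume A: "A \<in> events"
  have "prob (A - A \<inter> stays_in_S n) \<le> prob (space M - stays_in_S n)"
    using A sets.sets_into_space[OF A] stays_in_S_sets by (intro finite_measure_mono) auto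
  also have "\<dots> = 0" using prob_compl[OF stays_in_S_sets] prob_stays_in_S by simp
  finally have "prob A - prob (A \<inter> stays_in_S n) \<le> 0"
    using A stays_in_S_sets finite_measure_Diff[of A "A \<inter> stays_in_S n"] by simp
  moreover have "prob (A \<inter> stays_in_S n) \<le> prob A"
    using A by (intro finite_measure_mono) auto
  ultimately show ?thesis by simp
qed

lemma markov_property_step:
  assumes E: "{\<omega> \<in> space M. Q (\<lambda>i. X i \<omega>) \<and> R (X n \<omega>) (X (Suc n) \<omega>)} \<in> events"
    and Q: "\<And>x y. (\<And>i. i \<le> n \<Longrightarrow> x i = y i) \<Longrightarrow> Q x = Q y"
  shows "prob {\<omega> \<in> space M. Q (\<lambda>i. X i \<omega>) \<and> R (X n \<omega>) (X (Suc n) \<omega>)}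
    = (\<Sum>xs\<in>paths n Q. path_weight n xs * (\<Sum>s\<in>{s\<in>S. R (xs n) s}. P (xs n) s))"
proof -
  let ?Q' = "\<lambda>ys. Q ys \<and> R (ys n) (ys (Suc n))"
  have Q': "?Q' x = ?Q' y" if "\<And>i. i \<le> Suc n \<Longrightarrow> x i = y i" for x y
    using Q[of x y] that by simp
  have "prob {\<omega> \<in> space M. Q (\<lambda>i. X i \<omega>) \<and> R (X n \<omega>) (X (Suc n) \<omega>)}
      = prob {\<omega> \<in> space M. (\<forall>i\<le>Suc n. X i \<omega> \<in> S) \<and> ?Q' (\<lambda>i. X i \<omega>)}"
    using prob_inter_stays_in_S[OF E, of "Suc n"] by (simp add: stays_in_S_def Int_def conj_ac)
  also have "\<dots> = (\<Sum>ys\<in>paths (Suc n) ?Q'. path_weight (Suc n) ys)"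
    by (rule prob_paths) (rule Q')
  also have "\<dots> = (\<Sum>xs\<in>paths n Q. path_weight n xs * (\<Sum>s\<in>{s\<in>S. R (xs n) s}. P (xs n) s))"
    by (rule sum_path_weight_Suc[OF Q])
  finally show ?thesis .
qed

lemma observed_prefix_event_sets:
  fixes f :: "'a \<Rightarrow> 'b::countable"
  assumes Q: "\<And>x y. (\<And>i. i \<le> n \<Longrightarrow> f (x i) = f (y i)) \<Longrightarrow> Q x = Q y"
  shows "{\<omega> \<in> space M. Q (\<lambda>i. X i \<omega>)} \<in> events"
proof -
  define obs where "obs \<omega> = restrict (\<lambda>i. f (X i \<omega>)) {..n}" for \<omega>
  define C where "C v = {\<omega> \<in> space M. obs \<omega> = v}" for v
  let ?E = "{\<omega> \<in> space M. Q (\<lambda>i. X i \<omega>)}"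
  have obs_eq: "Q (\<lambda>i. X i \<omega>) = Q (\<lambda>i. X i \<omega>')" if "obs \<omega> = obs \<omega>'" for \<omega> \<omega>'
  proof (rule Q)
    fix i assume "i \<le> n"
    then show "f (X i \<omega>) = f (X i \<omega>')" using fun_cong[OF that, of i] by (simp add: obs_def)
  qed
  have C_sets: "C v \<in> events" if "v \<in> PiE {..n} (\<lambda>_. UNIV)" for v
  proof -
    have "C v = (\<Inter>i\<in>{..n}. X i -` {a. f a = v i} \<inter> space M)"
      using that unfolding C_def obs_def by (auto simp: fun_eq_iff PiE_iff extensional_def)
    also have "\<dots> \<in> events" by (intro sets.finite_INT X_vimage_sets) auto
    finally show ?thesis .
  qed
  have E_eq: "?E = (\<Union>v\<in>obs ` ?E. C v)"
  proof (intro equalityI subsetI)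
    fix \<omega> assume "\<omega> \<in> ?E"
    then show "\<omega> \<in> (\<Union>v\<in>obs ` ?E. C v)" unfolding C_def by blast
  next
    fix \<omega> assume "\<omega> \<in> (\<Union>v\<in>obs ` ?E. C v)"
    then obtain \<omega>' where "\<omega>' \<in> ?E" "\<omega> \<in> space M" "obs \<omega> = obs \<omega>'" unfolding C_def by blast
    then show "\<omega> \<in> ?E" using obs_eq by blast
  qed
  have range: "obs ` ?E \<subseteq> PiE {..n} (\<lambda>_. UNIV)"
    unfolding obs_def by (intro image_subsetI) (simp add: restrict_PiE_iff)
  moreover have "countable (PiE {..n} (\<lambda>_. UNIV :: 'b set))" by (intro countable_PiE) auto
  ultimately have "countable (obs ` ?E)" by (rule countable_subset)
  then have "(\<Union>v\<in>obs ` ?E. C v) \<in> events"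
    by (rule sets.countable_UN'') (use range C_sets in blast)
  then show ?thesis by (subst E_eq)
qed

end

locale learning_model =
  fixes N K :: nat and lam mu :: real and p :: "nat \<Rightarrow> real"
  assumes K2: "2 \<le> K"
    and p12: "p 2 < p 1"
    and pmono: "\<forall>i j. 2 \<le> i \<longrightarrow> i \<le> j \<longrightarrow> j \<le> K \<longrightarrow> p j \<le> p i"
    and pK: "0 \<le> p K"
    and lam: "0 < lam" and mu: "0 < mu" "mu \<le> 1"
begin

definition state_space :: "(nat \<Rightarrow> nat) set" where
  "state_space = {s. (\<forall>i>K. s i = 0) \<and> (\<Sum>i\<le>K. s i) = N}"

definition adopt_rate :: "(nat \<Rightarrow> nat) \<Rightarrow> nat \<Rightarrow> real" where
  "adopt_rate s k = real (s 0) * lam * (mu / real K + (1 - mu) * real (s k) / real N) * p k"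
definition switch_rate :: "(nat \<Rightarrow> nat) \<Rightarrow> nat \<Rightarrow> nat \<Rightarrow> real" where
  "switch_rate s k k' = real (s k') * lam * (real (s k) / real N) * p k"

abbreviation trans_prob :: "(nat \<Rightarrow> nat) \<Rightarrow> (nat \<Rightarrow> nat) \<Rightarrow> real" where
  "trans_prob \<equiv> jump_prob N K lam mu p"
abbreviation exit_rate :: "(nat \<Rightarrow> nat) \<Rightarrow> real" where
  "exit_rate \<equiv> total_rate N K lam mu p"

lemma rate_eq: "rate N K lam mu p s s' =
   (\<Sum>k\<in>{1..K}. if s' = move s k 0 then adopt_rate s k else 0)
 + (\<Sum>k\<in>{1..K}. \<Sum>k'\<in>{1..K} - {k}. if s' = move s k k' then switch_rate s k k' else 0)"
  unfolding rate_def adopt_rate_def switch_rate_def by (rule refl)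

lemma exit_rate_eq:
  "exit_rate s = (\<Sum>k\<in>{1..K}. adopt_rate s k) + (\<Sum>k\<in>{1..K}. \<Sum>k'\<in>{1..K} - {k}. switch_rate s k k')"
  unfolding total_rate_def adopt_rate_def switch_rate_def by (rule refl)

lemma p_nonneg: "k \<in> {1..K} \<Longrightarrow> 0 \<le> p k"
proof -
  assume k: "k \<in> {1..K}"
  have "p K \<le> p 2" using pmono[rule_format, of 2 K] K2 by simp
  show ?thesis
  proof (cases "k = 1")
    case True then show ?thesis using p12 pK \<open>p K \<le> p 2\<close> by simp
  next
    case False then have "p K \<le> p k" using pmono[rule_format, of k K] k by simp
    then show ?thesis using pK by simp
  qed
qed

lemma p_le_p2: "k \<in> {2..K} \<Longrightarrow> p k \<le> p 2"
  using pmono[rule_format, of 2 k] by simp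

lemma p1_pos: "0 < p 1"
  using p12 p_nonneg[of 2] K2 by simp

lemma p2_nonneg: "0 \<le> p 2"
  using p_nonneg[of 2] K2 by simp

lemma adopt_rate_nonneg: "k \<in> {1..K} \<Longrightarrow> 0 \<le> adopt_rate s k"
  unfolding adopt_rate_def using p_nonneg[of k] lam mu
  by (intro mult_nonneg_nonneg add_nonneg_nonneg divide_nonneg_nonneg) auto

lemma switch_rate_nonneg: "k \<in> {1..K} \<Longrightarrow> 0 \<le> switch_rate s k k'"
  unfolding switch_rate_def using p_nonneg[of k] lam
  by (intro mult_nonneg_nonneg divide_nonneg_nonneg) auto

lemma exit_rate_nonneg: "0 \<le> exit_rate s"
  unfolding exit_rate_eq
  by (intro add_nonneg_nonneg sum_nonneg adopt_rate_nonneg switch_rate_nonneg) auto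

lemma rate_nonneg: "0 \<le> rate N K lam mu p s s'"
  unfolding rate_eq
  by (intro add_nonneg_nonneg sum_nonneg) (auto intro: adopt_rate_nonneg switch_rate_nonneg)

lemma trans_prob_nonneg: "0 \<le> trans_prob s s'"
  unfolding jump_prob_def using exit_rate_nonneg rate_nonneg by simp

lemma sum_rate: assumes "finite A"
  shows "(\<Sum>s'\<in>A. rate N K lam mu p s s') =
   (\<Sum>k\<in>{1..K}. if move s k 0 \<in> A then adopt_rate s k else 0)
 + (\<Sum>k\<in>{1..K}. \<Sum>k'\<in>{1..K} - {k}. if move s k k' \<in> A then switch_rate s k k' else 0)"
proof -
  have "(\<Sum>s'\<in>A. rate N K lam mu p s s') =
     (\<Sum>s'\<in>A. \<Sum>k\<in>{1..K}. if s' = move s k 0 then adopt_rate s k else 0)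
   + (\<Sum>s'\<in>A. \<Sum>k\<in>{1..K}. \<Sum>k'\<in>{1..K} - {k}. if s' = move s k k' then switch_rate s k k' else 0)"
    unfolding rate_eq by (simp add: sum.distrib)
  also have "(\<Sum>s'\<in>A. \<Sum>k\<in>{1..K}. if s' = move s k 0 then adopt_rate s k else 0)
     = (\<Sum>k\<in>{1..K}. \<Sum>s'\<in>A. if s' = move s k 0 then adopt_rate s k else 0)"
    by (rule sum.swap)
  also have "\<dots> = (\<Sum>k\<in>{1..K}. if move s k 0 \<in> A then adopt_rate s k else 0)"
    using assms by (simp add: sum.delta)
  also have "(\<Sum>s'\<in>A. \<Sum>k\<in>{1..K}. \<Sum>k'\<in>{1..K} - {k}. if s' = move s k k' then switch_rate s k k' else 0)
     = (\<Sum>k\<in>{1..K}. \<Sum>s'\<in>A. \<Sum>k'\<in>{1..K} - {k}. if s' = move s k k' then switch_rate s k k' else 0)"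
    by (rule sum.swap)
  also have "\<dots> = (\<Sum>k\<in>{1..K}. \<Sum>k'\<in>{1..K} - {k}. \<Sum>s'\<in>A. if s' = move s k k' then switch_rate s k k' else 0)"
    by (intro sum.cong refl sum.swap)
  also have "\<dots> = (\<Sum>k\<in>{1..K}. \<Sum>k'\<in>{1..K} - {k}. if move s k k' \<in> A then switch_rate s k k' else 0)"
    using assms by (simp add: sum.delta)
  finally show ?thesis .
qed

lemma state_le_N: "s \<in> state_space \<Longrightarrow> i \<le> K \<Longrightarrow> s i \<le> N"
  unfolding state_space_def using member_le_sum[of i "{..K}" s] by auto

lemma finite_state_space: "finite state_space"
proof -
  have "state_space \<subseteq> (\<lambda>f i. if i \<le> K then f i else 0) ` (PiE {..K} (\<lambda>_. {..N}))"
  proof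
    fix s assume s: "s \<in> state_space"
    have "s = (\<lambda>i. if i \<le> K then (restrict s {..K}) i else 0)"
      using s by (auto simp: state_space_def)
    moreover have "restrict s {..K} \<in> PiE {..K} (\<lambda>_. {..N})"
      using state_le_N[OF s] by auto
    ultimately show "s \<in> (\<lambda>f i. if i \<le> K then f i else 0) ` (PiE {..K} (\<lambda>_. {..N}))"
      by blast
  qed
  then show ?thesis by (rule finite_subset) (intro finite_imageI finite_PiE; simp)
qed

lemma init_state_in_state_space: "init_state N \<in> state_space"
  unfolding state_space_def init_state_def by (simp add: sum.delta)

lemma move_in_state_space:
  assumes s: "s \<in> state_space" and k: "k \<in> {1..K}" and k': "k' \<le> K" "k' \<noteq> k" and pos: "0 < s k'"
  shows "move s k k' \<in> state_space"
proof -
  have pt: "int (move s k k' i) = int (s i) + (if i = k then 1 else 0) - (if i = k' then 1 else 0)" for i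
    using pos k'(2) by (auto simp: move_def unitv_def)
  have "int (\<Sum>i\<le>K. move s k k' i) = (\<Sum>i\<le>K. int (move s k k' i))" by simp
  also have "\<dots> = (\<Sum>i\<le>K. int (s i)) + (\<Sum>i\<le>K. (if i = k then 1 else 0)) - (\<Sum>i\<le>K. (if i = k' then 1 else 0))"
    unfolding pt by (simp add: sum.distrib sum_subtractf)
  also have "\<dots> = (\<Sum>i\<le>K. int (s i))" using k k' by (simp add: sum.delta)
  also have "\<dots> = int (\<Sum>i\<le>K. s i)" by simp
  also have "\<dots> = int N" using s unfolding state_space_def by simp
  finally have "(\<Sum>i\<le>K. move s k k' i) = N" by linarith
  moreover have "\<forall>i>K. move s k k' i = 0" using s k k' by (auto simp: state_space_def move_def unitv_def)
  ultimately show ?thesis by (simp add: state_space_def)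
qed

lemma adopt_move_in_state_space:
  "s \<in> state_space \<Longrightarrow> k \<in> {1..K} \<Longrightarrow> adopt_rate s k \<noteq> 0 \<Longrightarrow> move s k 0 \<in> state_space"
  by (rule move_in_state_space) (auto simp: adopt_rate_def)

lemma switch_move_in_state_space:
  "s \<in> state_space \<Longrightarrow> k \<in> {1..K} \<Longrightarrow> k' \<in> {1..K} - {k} \<Longrightarrow> switch_rate s k k' \<noteq> 0
   \<Longrightarrow> move s k k' \<in> state_space"
  by (rule move_in_state_space) (auto simp: switch_rate_def)

lemma sum_rate_state_space: assumes s: "s \<in> state_space"
  shows "(\<Sum>s'\<in>{s'\<in>state_space. P s'}. rate N K lam mu p s s') =
   (\<Sum>k\<in>{1..K}. if P (move s k 0) then adopt_rate s k else 0)
 + (\<Sum>k\<in>{1..K}. \<Sum>k'\<in>{1..K} - {k}. if P (move s k k') then switch_rate s k k' else 0)"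
proof -
  have fin: "finite {s'\<in>state_space. P s'}" using finite_state_space by simp
  have e0: "(if move s k 0 \<in> {s'\<in>state_space. P s'} then adopt_rate s k else 0)
      = (if P (move s k 0) then adopt_rate s k else 0)"
    if "k \<in> {1..K}" for k
    using adopt_move_in_state_space[OF s that] by auto
  have e1: "(if move s k k' \<in> {s'\<in>state_space. P s'} then switch_rate s k k' else 0)
      = (if P (move s k k') then switch_rate s k k' else 0)"
    if "k \<in> {1..K}" "k' \<in> {1..K} - {k}" for k k'
    using switch_move_in_state_space[OF s that] by auto
  show ?thesis unfolding sum_rate[OF fin]
    by (intro arg_cong2[where f="(+)"] sum.cong refl e0 e1) auto
qed

lemma sum_rate_eq_exit_rate:
  "s \<in> state_space \<Longrightarrow> (\<Sum>s'\<in>state_space. rate N K lam mu p s s') = exit_rate s"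
  using sum_rate_state_space[of s "\<lambda>_. True"] by (simp add: exit_rate_eq)

lemma sum_trans_prob: assumes s: "s \<in> state_space" shows "(\<Sum>s'\<in>state_space. trans_prob s s') = 1"
proof (cases "exit_rate s = 0")
  case True
  then show ?thesis using s finite_state_space by (simp add: jump_prob_def sum.delta)
next
  case False
  then have "(\<Sum>s'\<in>state_space. trans_prob s s')
      = (\<Sum>s'\<in>state_space. rate N K lam mu p s s') / exit_rate s"
    by (simp add: jump_prob_def sum_divide_distrib)
  then show ?thesis using sum_rate_eq_exit_rate[OF s] False by simp
qed

lemma trans_prob_pos_coord1: assumes "0 < trans_prob s s'"
  shows "s' 1 = s 1 \<or> s' 1 = Suc (s 1) \<or> s' 1 = s 1 - 1"
proof (cases "exit_rate s = 0")
  case True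
  then have "s' = s" using assms by (auto simp: jump_prob_def split: if_splits)
  then show ?thesis by simp
next
  case False
  then have "rate N K lam mu p s s' \<noteq> 0" using assms by (auto simp: jump_prob_def)
  have "(\<exists>k\<in>{1..K}. s' = move s k 0) \<or> (\<exists>k\<in>{1..K}. \<exists>k'\<in>{1..K} - {k}. s' = move s k k')"
  proof (rule ccontr)
    assume nn: "\<not> ?thesis"
    have "(\<Sum>k\<in>{1..K}. if s' = move s k 0 then adopt_rate s k else 0) = 0"
      using nn by (intro sum.neutral) auto
    moreover have "(\<Sum>k\<in>{1..K}. \<Sum>k'\<in>{1..K} - {k}. if s' = move s k k' then switch_rate s k k' else 0) = 0"
      using nn by (intro sum.neutral) auto
    ultimately show False using \<open>rate N K lam mu p s s' \<noteq> 0\<close> unfolding rate_eq by simp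
  qed
  then show ?thesis by (auto simp: move_def unitv_def split: if_splits)
qed

definition up_prob :: "(nat \<Rightarrow> nat) \<Rightarrow> real" where
  "up_prob s = (\<Sum>s'\<in>{s'\<in>state_space. s' 1 = Suc (s 1)}. trans_prob s s')"
definition down_prob :: "(nat \<Rightarrow> nat) \<Rightarrow> real" where
  "down_prob s = (\<Sum>s'\<in>{s'\<in>state_space. s' 1 = s 1 - 1}. trans_prob s s')"
definition stay_prob :: "(nat \<Rightarrow> nat) \<Rightarrow> real" where
  "stay_prob s = (\<Sum>s'\<in>{s'\<in>state_space. s' 1 = s 1}. trans_prob s s')"
definition up_rate :: "(nat \<Rightarrow> nat) \<Rightarrow> real" where
  "up_rate s = (\<Sum>s'\<in>{s'\<in>state_space. s' 1 = Suc (s 1)}. rate N K lam mu p s s')"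
definition down_rate :: "(nat \<Rightarrow> nat) \<Rightarrow> real" where
  "down_rate s = (\<Sum>s'\<in>{s'\<in>state_space. s' 1 = s 1 - 1}. rate N K lam mu p s s')"

lemma down_prob_nonneg: "0 \<le> down_prob s"
  unfolding down_prob_def by (intro sum_nonneg trans_prob_nonneg)

lemma up_down_stay_prob: assumes s: "s \<in> state_space" and pos: "0 < s 1"
  shows "up_prob s + down_prob s + stay_prob s = 1"
proof -
  have pt: "trans_prob s s' = (if s' 1 = Suc (s 1) then trans_prob s s' else 0)
     + (if s' 1 = s 1 - 1 then trans_prob s s' else 0) + (if s' 1 = s 1 then trans_prob s s' else 0)" for s'
  proof (cases "0 < trans_prob s s'")
    case True
    then show ?thesis using trans_prob_pos_coord1[OF True] pos by auto
  next
    case False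
    then have "trans_prob s s' = 0" using trans_prob_nonneg[of s s'] by simp
    then show ?thesis by simp
  qed
  have "1 = (\<Sum>s'\<in>state_space. trans_prob s s')" using sum_trans_prob[OF s] by simp
  also have "\<dots> = (\<Sum>s'\<in>state_space. (if s' 1 = Suc (s 1) then trans_prob s s' else 0)
     + (if s' 1 = s 1 - 1 then trans_prob s s' else 0) + (if s' 1 = s 1 then trans_prob s s' else 0))"
    by (rule sum.cong[OF refl pt])
  also have "\<dots> = up_prob s + down_prob s + stay_prob s"
    unfolding up_prob_def down_prob_def stay_prob_def using finite_state_space
    by (simp add: sum.distrib sum.inter_filter)
  finally show ?thesis by simp
qed

lemma up_prob_eq: "exit_rate s \<noteq> 0 \<Longrightarrow> up_prob s = up_rate s / exit_rate s"
  unfolding up_prob_def up_rate_def jump_prob_def by (simp add: sum_divide_distrib)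
lemma down_prob_eq: "exit_rate s \<noteq> 0 \<Longrightarrow> down_prob s = down_rate s / exit_rate s"
  unfolding down_prob_def down_rate_def jump_prob_def by (simp add: sum_divide_distrib)

lemma up_rate_ge: assumes s: "s \<in> state_space"
  shows "adopt_rate s 1 + (\<Sum>k'\<in>{1..K} - {1}. switch_rate s 1 k') \<le> up_rate s"
proof -
  let ?g0 = "\<lambda>k. if move s k 0 1 = Suc (s 1) then adopt_rate s k else 0"
  let ?g1 = "\<lambda>k k'. if move s k k' 1 = Suc (s 1) then switch_rate s k k' else 0"
  have eq: "up_rate s = (\<Sum>k\<in>{1..K}. ?g0 k) + (\<Sum>k\<in>{1..K}. \<Sum>k'\<in>{1..K} - {k}. ?g1 k k')"
    unfolding up_rate_def by (rule sum_rate_state_space[OF s])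
  have 1: "1 \<in> {1..K}" using K2 by simp
  have "?g0 1 \<le> (\<Sum>k\<in>{1..K}. ?g0 k)"
    by (rule member_le_sum[OF 1]) (auto intro: adopt_rate_nonneg)
  moreover have "?g0 1 = adopt_rate s 1" by (simp add: move_def unitv_def)
  moreover have "(\<Sum>k'\<in>{1..K} - {1}. ?g1 1 k') \<le> (\<Sum>k\<in>{1..K}. \<Sum>k'\<in>{1..K} - {k}. ?g1 k k')"
  proof (rule member_le_sum[OF 1])
    show "0 \<le> (\<Sum>k'\<in>{1..K} - {k}. ?g1 k k')" if "k \<in> {1..K} - {1}" for k
      using that switch_rate_nonneg[of k s] by (intro sum_nonneg) auto
  qed simp
  moreover have "(\<Sum>k'\<in>{1..K} - {1}. ?g1 1 k') = (\<Sum>k'\<in>{1..K} - {1}. switch_rate s 1 k')"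
    by (intro sum.cong refl) (auto simp: move_def unitv_def)
  ultimately show ?thesis unfolding eq by linarith
qed

lemma down_rate_le: assumes s: "s \<in> state_space" and pos: "0 < s 1"
  shows "down_rate s \<le> (\<Sum>k\<in>{1..K} - {1}. switch_rate s k 1)"
proof -
  let ?g0 = "\<lambda>k. if move s k 0 1 = s 1 - 1 then adopt_rate s k else 0"
  let ?g1 = "\<lambda>k k'. if move s k k' 1 = s 1 - 1 then switch_rate s k k' else 0"
  have eq: "down_rate s = (\<Sum>k\<in>{1..K}. ?g0 k) + (\<Sum>k\<in>{1..K}. \<Sum>k'\<in>{1..K} - {k}. ?g1 k k')"
    unfolding down_rate_def by (rule sum_rate_state_space[OF s])
  have z: "(\<Sum>k\<in>{1..K}. ?g0 k) = 0"
    using pos by (intro sum.neutral) (auto simp: move_def unitv_def)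
  have "(\<Sum>k\<in>{1..K}. \<Sum>k'\<in>{1..K} - {k}. ?g1 k k')
      \<le> (\<Sum>k\<in>{1..K}. \<Sum>k'\<in>{1..K} - {k}. if k' = 1 then switch_rate s k 1 else 0)"
  proof (intro sum_mono)
    fix k k' assume k: "k \<in> {1..K}" and k': "k' \<in> {1..K} - {k}"
    show "?g1 k k' \<le> (if k' = 1 then switch_rate s k 1 else 0)"
      using pos switch_rate_nonneg[OF k, of s k'] by (auto simp: move_def unitv_def)
  qed
  also have "\<dots> = (\<Sum>k\<in>{1..K}. if k \<noteq> 1 then switch_rate s k 1 else 0)"
    by (intro sum.cong refl) (auto simp: sum.delta')
  also have "\<dots> = (\<Sum>k\<in>{1..K} - {1}. switch_rate s k 1)"
    by (rule sum.mono_neutral_cong_right) auto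
  finally show ?thesis unfolding eq z by simp
qed

lemma down_rate_ratio: assumes s: "s \<in> state_space" and pos: "0 < s 1"
  shows "p 1 * down_rate s \<le> p 2 * up_rate s"
proof -
  have "p 1 * down_rate s \<le> p 1 * (\<Sum>k\<in>{1..K} - {1}. switch_rate s k 1)"
    using down_rate_le[OF s pos] p1_pos by (simp add: mult_left_mono)
  also have "\<dots> = (\<Sum>k\<in>{1..K} - {1}. p 1 * switch_rate s k 1)" by (simp add: sum_distrib_left)
  also have "\<dots> \<le> (\<Sum>k\<in>{1..K} - {1}. p 2 * switch_rate s 1 k)"
  proof (intro sum_mono)
    fix k assume k: "k \<in> {1..K} - {1}"
    then have "p k \<le> p 2" using p_le_p2[of k] by auto
    moreover have "0 \<le> p 1 * real (s 1) * lam * (real (s k) / real N)"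
      using p1_pos lam by simp
    ultimately have "(p 1 * real (s 1) * lam * (real (s k) / real N)) * p k
        \<le> (p 1 * real (s 1) * lam * (real (s k) / real N)) * p 2"
      by (rule mult_left_mono)
    then show "p 1 * switch_rate s k 1 \<le> p 2 * switch_rate s 1 k"
      unfolding switch_rate_def by (simp add: field_simps)
  qed
  also have "\<dots> = p 2 * (\<Sum>k\<in>{1..K} - {1}. switch_rate s 1 k)" by (simp add: sum_distrib_left)
  also have "\<dots> \<le> p 2 * up_rate s"
    using up_rate_ge[OF s] adopt_rate_nonneg[of 1 s] K2 p2_nonneg by (intro mult_left_mono) auto
  finally show ?thesis .
qed

lemma up_rate_le_exit_rate: "s \<in> state_space \<Longrightarrow> up_rate s \<le> exit_rate s"
  unfolding up_rate_def sum_rate_eq_exit_rate[symmetric]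
  using finite_state_space by (intro sum_mono2) (auto intro: rate_nonneg)

lemma down_prob_ratio: assumes s: "s \<in> state_space" and pos: "0 < s 1"
  shows "p 1 * down_prob s \<le> p 2 * up_prob s"
proof (cases "exit_rate s = 0")
  case True
  have "up_prob s = 0" "down_prob s = 0" using True pos
    by (auto simp: up_prob_def down_prob_def jump_prob_def intro!: sum.neutral)
  then show ?thesis by simp
next
  case False
  then have "0 < exit_rate s" using exit_rate_nonneg[of s] by simp
  have "p 1 * down_rate s / exit_rate s \<le> p 2 * up_rate s / exit_rate s"
    using down_rate_ratio[OF s pos] \<open>0 < exit_rate s\<close> by (intro divide_right_mono) auto
  then show ?thesis unfolding up_prob_eq[OF False] down_prob_eq[OF False] by simp
qed

lemma up_prob_pos: assumes s: "s \<in> state_space" and pos: "0 < s 1" and neN: "s 1 \<noteq> N"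
  shows "0 < up_prob s"
proof -
  have le: "s 1 \<le> N" using state_le_N[OF s] K2 by simp
  have Npos: "0 < N" using le pos by simp
  have "0 < adopt_rate s 1 + (\<Sum>k'\<in>{1..K} - {1}. switch_rate s 1 k')"
  proof (cases "s 0 = 0")
    case False
    have "0 < mu / real K + (1 - mu) * real (s 1) / real N"
      using mu K2 by (intro add_pos_nonneg divide_pos_pos) auto
    then have "0 < adopt_rate s 1" unfolding adopt_rate_def using False lam p1_pos by simp
    moreover have "0 \<le> (\<Sum>k'\<in>{1..K} - {1}. switch_rate s 1 k')"
      using K2 by (intro sum_nonneg switch_rate_nonneg) auto
    ultimately show ?thesis by simp
  next
    case True
    have "{..K} = insert 0 (insert 1 {2..K})" using K2 by auto
    then have "(\<Sum>i\<le>K. s i) = s 0 + (s 1 + (\<Sum>i\<in>{2..K}. s i))" by simp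
    then have "s 1 + (\<Sum>i\<in>{2..K}. s i) = N" using s True by (simp add: state_space_def)
    then have "(\<Sum>i\<in>{2..K}. s i) \<noteq> 0" using neN by auto
    then obtain i where i: "i \<in> {2..K}" "s i \<noteq> 0" by (meson sum.neutral)
    have "0 < switch_rate s 1 i" unfolding switch_rate_def using i lam pos Npos p1_pos by simp
    also have "switch_rate s 1 i \<le> (\<Sum>k'\<in>{1..K} - {1}. switch_rate s 1 k')"
      using i K2 by (intro member_le_sum switch_rate_nonneg) auto
    finally show ?thesis using adopt_rate_nonneg[of 1 s] K2 by simp
  qed
  then have up: "0 < up_rate s" using up_rate_ge[OF s] by linarith
  then have "exit_rate s \<noteq> 0" using up_rate_le_exit_rate[OF s] by simp
  then show ?thesis
    unfolding up_prob_eq[OF \<open>exit_rate s \<noteq> 0\<close>] using up up_rate_le_exit_rate[OF s] by simp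
qed

text \<open>The \<open>1\<close> only guards against an empty set of interior states.\<close>
definition min_up_prob :: real where
  "min_up_prob = Min (insert 1 (up_prob ` {s \<in> state_space. 0 < s 1 \<and> s 1 \<noteq> N}))"

lemma min_up_prob_pos: "0 < min_up_prob"
  unfolding min_up_prob_def using finite_state_space up_prob_pos by (simp add: Min_gr_iff)

lemma min_up_prob_le_1: "min_up_prob \<le> 1"
  unfolding min_up_prob_def using finite_state_space by (intro Min_le) auto

lemma min_up_prob_le: "s \<in> state_space \<Longrightarrow> 0 < s 1 \<Longrightarrow> s 1 \<noteq> N \<Longrightarrow> min_up_prob \<le> up_prob s"
  unfolding min_up_prob_def using finite_state_space by (intro Min_le) auto

end

lemma change_time_Suc_eq_Some:
  assumes t: "change_time x k = Some t"
  shows "change_time x (Suc k) = Some l \<longleftrightarrow>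
     t < l \<and> x l 1 \<noteq> x t 1 \<and> (\<forall>j. t \<le> j \<and> j < l \<longrightarrow> x j 1 = x t 1)"
    (is "_ \<longleftrightarrow> ?first_change l")
proof (cases "\<exists>l>t. x l 1 \<noteq> x t 1")
  case True
  define l0 where "l0 = (LEAST l. t < l \<and> x l 1 \<noteq> x t 1)"
  have "t < l0 \<and> x l0 1 \<noteq> x t 1"
    unfolding l0_def using True by (rule LeastI_ex)
  moreover have "x j 1 = x t 1" if "t \<le> j" "j < l0" for j
    using not_less_Least[of j "\<lambda>l. t < l \<and> x l 1 \<noteq> x t 1"] that
    unfolding l0_def by (cases "j = t") auto
  ultimately have first: "?first_change l0" by blast
  have unique: "?first_change l \<longleftrightarrow> l = l0"
  proof
    assume l: "?first_change l"
    have "\<not> l < l0" using l first less_imp_le by blast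
    moreover have "\<not> l0 < l" using l first less_imp_le by blast
    ultimately show "l = l0" by simp
  qed (use first in blast)
  have "change_time x (Suc k) = Some l0"
    using t True by (simp add: l0_def)
  then have "change_time x (Suc k) = Some l \<longleftrightarrow> l = l0" by auto
  with unique show ?thesis by blast
next
  case False
  then have "change_time x (Suc k) = None" using t by simp
  moreover have "\<not> ?first_change l" using False by blast
  ultimately show ?thesis by simp
qed

lemma change_time_Suc_SomeD: "change_time x (Suc k) = Some l \<Longrightarrow> \<exists>t. change_time x k = Some t"
  by (cases "change_time x k") auto

lemma change_time_prefix:
  assumes agree: "\<And>i. i \<le> n \<Longrightarrow> x i 1 = y i 1"
  shows "change_time x k = Some t \<Longrightarrow> t \<le> n \<Longrightarrow> change_time y k = Some t"
proof (induction k arbitrary: t)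
  case 0
  then show ?case by simp
next
  case (Suc k)
  obtain t0 where t0: "change_time x k = Some t0"
    using change_time_Suc_SomeD[OF Suc.prems(1)] by blast
  have first: "t0 < t" "x t 1 \<noteq> x t0 1" "\<And>j. t0 \<le> j \<Longrightarrow> j < t \<Longrightarrow> x j 1 = x t0 1"
    using Suc.prems(1) change_time_Suc_eq_Some[OF t0] by blast+
  have y_t0: "change_time y k = Some t0" using Suc.IH[OF t0] first(1) Suc.prems(2) by simp
  have y_eq: "y j 1 = x j 1" if "j \<le> t" for j using agree Suc.prems(2) that by simp
  have "y j 1 = y t0 1" if "t0 \<le> j" "j < t" for j
    using first(3)[OF that] y_eq[of j] y_eq[of t0] that first(1) by simp
  moreover have "y t 1 \<noteq> y t0 1" using first(1,2) y_eq[of t] y_eq[of t0] by simp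
  ultimately have "t0 < t \<and> y t 1 \<noteq> y t0 1 \<and> (\<forall>j. t0 \<le> j \<and> j < t \<longrightarrow> y j 1 = y t0 1)"
    using first(1) by blast
  then show ?case using change_time_Suc_eq_Some[OF y_t0] by blast
qed

definition waiting :: "nat \<Rightarrow> nat \<Rightarrow> nat \<Rightarrow> nat \<Rightarrow> (nat \<Rightarrow> nat \<Rightarrow> nat) \<Rightarrow> bool" where
  "waiting N k t m x \<longleftrightarrow> change_time x k = Some t \<and> x t 1 \<noteq> 0 \<and> x t 1 \<noteq> N
    \<and> (\<forall>j\<in>{t..t + m}. x j 1 = x t 1)"

lemma waiting_value: "waiting N k t m x \<Longrightarrow> t \<le> j \<Longrightarrow> j \<le> t + m \<Longrightarrow> x j 1 = x t 1"
  unfolding waiting_def using atLeastAtMost_iff by blast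

lemma waiting_Suc:
  "waiting N k t (Suc m) x \<longleftrightarrow> waiting N k t m x \<and> x (Suc (t + m)) 1 = x (t + m) 1"
proof -
  have I: "{t..t + Suc m} = insert (Suc (t + m)) {t..t + m}" by auto
  have "waiting N k t (Suc m) x \<longleftrightarrow> waiting N k t m x \<and> x (Suc (t + m)) 1 = x t 1"
    unfolding waiting_def I by blast
  moreover have "x (t + m) 1 = x t 1" if "waiting N k t m x"
    using waiting_value[OF that, of "t + m"] by simp
  ultimately show ?thesis by auto
qed

lemma waiting_prefix:
  assumes agree: "\<And>i. i \<le> t + m \<Longrightarrow> x i 1 = y i 1"
  shows "waiting N k t m x \<longleftrightarrow> waiting N k t m y"
proof -
  have "change_time x k = Some t \<longleftrightarrow> change_time y k = Some t"
    using change_time_prefix[of "t + m" x y] change_time_prefix[of "t + m" y x] agree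
    by (metis le_add1)
  moreover have "(\<forall>j\<in>{t..t + m}. x j 1 = x t 1) \<longleftrightarrow> (\<forall>j\<in>{t..t + m}. y j 1 = y t 1)"
    using agree by simp
  ultimately show ?thesis unfolding waiting_def using agree[of t] by (metis le_add1)
qed

lemma waiting_start_unique: "waiting N k t m x \<Longrightarrow> waiting N k t' m' x \<Longrightarrow> t = t'"
  unfolding waiting_def by (metis option.inject)

lemma waiting_le_first_change:
  assumes "waiting N k t m x" "x (Suc (t + m)) 1 \<noteq> x (t + m) 1" "waiting N k t m' x"
  shows "m' \<le> m"
proof (rule ccontr)
  assume "\<not> m' \<le> m"
  then have "x (Suc (t + m)) 1 = x t 1" "x (t + m) 1 = x t 1"
    using waiting_value[OF assms(3), of "Suc (t + m)"] waiting_value[OF assms(3), of "t + m"]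
    by simp_all
  with assms(2) show False by simp
qed

lemma Wproc_Some: "Wproc x j = Some w \<longleftrightarrow> (\<exists>t. change_time x j = Some t \<and> x t 1 = w)"
  unfolding Wproc_def by auto

lemma Wproc_interior_iff:
  "(\<exists>w. Wproc x k = Some w \<and> w \<noteq> 0 \<and> w \<noteq> N) \<longleftrightarrow> (\<exists>t. waiting N k t 0 x)"
  unfolding Wproc_Some waiting_def by auto

lemma Wproc_next_iff:
  assumes moves: "\<And>w. w \<noteq> 0 \<Longrightarrow> f w \<noteq> w"
  shows "(\<exists>w. Wproc x k = Some w \<and> w \<noteq> 0 \<and> w \<noteq> N \<and> Wproc x (Suc k) = Some (f w)) \<longleftrightarrow>
    (\<exists>t m. waiting N k t m x \<and> x (Suc (t + m)) 1 = f (x (t + m) 1))"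
proof
  assume "\<exists>w. Wproc x k = Some w \<and> w \<noteq> 0 \<and> w \<noteq> N \<and> Wproc x (Suc k) = Some (f w)"
  then obtain t l where t: "change_time x k = Some t" "x t 1 \<noteq> 0" "x t 1 \<noteq> N"
    and l: "change_time x (Suc k) = Some l" "x l 1 = f (x t 1)"
    unfolding Wproc_Some by blast
  have first: "t < l" "\<And>j. t \<le> j \<Longrightarrow> j < l \<Longrightarrow> x j 1 = x t 1"
    using l(1) change_time_Suc_eq_Some[OF t(1)] by blast+
  define m where "m = l - Suc t"
  have l_eq: "l = Suc (t + m)" unfolding m_def using first(1) by simp
  have "x j 1 = x t 1" if "j \<in> {t..t + m}" for j
    using first(2)[of j] that l_eq by simp
  then have "waiting N k t m x" unfolding waiting_def using t by blast
  moreover have "x (t + m) 1 = x t 1" using first(2)[of "t + m"] l_eq by simp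
  ultimately show "\<exists>t m. waiting N k t m x \<and> x (Suc (t + m)) 1 = f (x (t + m) 1)"
    using l(2) l_eq by metis
next
  assume "\<exists>t m. waiting N k t m x \<and> x (Suc (t + m)) 1 = f (x (t + m) 1)"
  then obtain t m where W: "waiting N k t m x" and step: "x (Suc (t + m)) 1 = f (x (t + m) 1)"
    by blast
  have t: "change_time x k = Some t" "x t 1 \<noteq> 0" "x t 1 \<noteq> N"
    using W unfolding waiting_def by blast+
  have tm: "x (t + m) 1 = x t 1" using waiting_value[OF W, of "t + m"] by simp
  have "x (Suc (t + m)) 1 \<noteq> x t 1" using step tm moves t(2) by metis
  moreover have "x j 1 = x t 1" if "t \<le> j" "j < Suc (t + m)" for j
    using waiting_value[OF W, of j] that by simp
  moreover have "t < Suc (t + m)" by simp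
  ultimately have "change_time x (Suc k) = Some (Suc (t + m))"
    using change_time_Suc_eq_Some[OF t(1)] by blast
  then show "\<exists>w. Wproc x k = Some w \<and> w \<noteq> 0 \<and> w \<noteq> N \<and> Wproc x (Suc k) = Some (f w)"
    using t tm step unfolding Wproc_Some by metis
qed

locale learning_chain = learning_model N K lam mu p + prob_space M
  for N K :: nat and lam mu :: real and p :: "nat \<Rightarrow> real" and M :: "'w measure" +
  fixes X :: "nat \<Rightarrow> 'w \<Rightarrow> (nat \<Rightarrow> nat)" and k :: nat
  assumes measurable_X: "\<forall>n. X n \<in> measurable M (count_space UNIV)"
    and law_X: "\<forall>n xs. measure M {\<omega> \<in> space M. \<forall>i\<le>n. X i \<omega> = xs i}
       = (if xs 0 = init_state N then 1 else 0) * (\<Prod>i<n. trans_prob (xs i) (xs (Suc i)))"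

sublocale learning_chain \<subseteq> finite_markov_chain M state_space trans_prob "init_state N" X
  using finite_state_space init_state_in_state_space trans_prob_nonneg sum_trans_prob
    measurable_X law_X
  by unfold_locales auto

context learning_chain
begin

abbreviation waiting_paths :: "nat \<Rightarrow> nat \<Rightarrow> (nat \<Rightarrow> nat \<Rightarrow> nat) set" where
  "waiting_paths t m \<equiv> paths (t + m) (waiting N k t m)"

definition waiting_event :: "nat \<Rightarrow> nat \<Rightarrow> 'w set" where
  "waiting_event t m = {\<omega> \<in> space M. waiting N k t m (\<lambda>l. X l \<omega>)}"

definition step_event :: "nat \<Rightarrow> nat \<Rightarrow> (nat \<Rightarrow> nat \<Rightarrow> bool) \<Rightarrow> 'w set" where
  "step_event t m R = {\<omega> \<in> space M. waiting N k t m (\<lambda>l. X l \<omega>)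
     \<and> R (X (t + m) \<omega> 1) (X (Suc (t + m)) \<omega> 1)}"

abbreviation up_step :: "nat \<Rightarrow> nat \<Rightarrow> bool" where
  "up_step a b \<equiv> b = a + 1"

abbreviation down_step :: "nat \<Rightarrow> nat \<Rightarrow> bool" where
  "down_step a b \<equiv> b = a - 1"

abbreviation up_event :: "nat \<Rightarrow> nat \<Rightarrow> 'w set" where
  "up_event t m \<equiv> step_event t m up_step"

abbreviation down_event :: "nat \<Rightarrow> nat \<Rightarrow> 'w set" where
  "down_event t m \<equiv> step_event t m down_step"

lemma waiting_event_eq: "waiting_event t m = step_event t m (\<lambda>_ _. True)"
  unfolding waiting_event_def step_event_def by simp

lemma waiting_event_Suc_eq: "waiting_event t (Suc m) = step_event t m (=)"
  unfolding waiting_event_def step_event_def waiting_Suc by (auto simp: eq_commute)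

lemma step_event_sets: "step_event t m R \<in> events"
proof -
  let ?Q = "\<lambda>x. waiting N k t m x \<and> R (x (t + m) 1) (x (Suc (t + m)) 1)"
  have "{\<omega> \<in> space M. ?Q (\<lambda>l. X l \<omega>)} \<in> events"
  proof (rule observed_prefix_event_sets[where f = "\<lambda>s. s 1" and n = "Suc (t + m)"])
    fix x y :: "nat \<Rightarrow> nat \<Rightarrow> nat"
    assume "\<And>i. i \<le> Suc (t + m) \<Longrightarrow> x i 1 = y i 1"
    then show "?Q x = ?Q y" using waiting_prefix[of t m x y] by simp
  qed
  then show ?thesis unfolding step_event_def .
qed

lemma prob_step_event_eq:
  "prob (step_event t m R) = (\<Sum>xs\<in>waiting_paths t m.
     path_weight (t + m) xs * (\<Sum>s\<in>{s \<in> state_space. R (xs (t + m) 1) (s 1)}. trans_prob (xs (t + m)) s))"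
proof -
  have prefix: "waiting N k t m x = waiting N k t m y" if "\<And>i. i \<le> t + m \<Longrightarrow> x i = y i" for x y
    by (rule waiting_prefix) (simp add: that)
  have "{\<omega> \<in> space M. waiting N k t m (\<lambda>i. X i \<omega>) \<and> R (X (t + m) \<omega> 1) (X (Suc (t + m)) \<omega> 1)} \<in> events"
    using step_event_sets[of t m R] by (simp only: step_event_def)
  from markov_property_step[of "waiting N k t m" "\<lambda>a b. R (a 1) (b 1)" "t + m", OF this prefix]
  show ?thesis by (simp only: step_event_def)
qed

lemma waiting_path_interior:
  assumes "xs \<in> waiting_paths t m"
  shows "xs (t + m) \<in> state_space" "0 < xs (t + m) 1" "xs (t + m) 1 \<noteq> N"
proof -
  have W: "waiting N k t m xs" and xs: "xs \<in> PiE {..t + m} (\<lambda>_. state_space)"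
    using assms unfolding paths_def by simp_all
  show "xs (t + m) \<in> state_space" using PiE_mem[OF xs] by simp
  have "xs (t + m) 1 = xs t 1" using waiting_value[OF W, of "t + m"] by simp
  moreover have "xs t 1 \<noteq> 0" "xs t 1 \<noteq> N" using W unfolding waiting_def by blast+
  ultimately show "0 < xs (t + m) 1" "xs (t + m) 1 \<noteq> N" by simp_all
qed

lemma prob_waiting_event:
  "prob (waiting_event t m) = (\<Sum>xs\<in>waiting_paths t m. path_weight (t + m) xs)"
  unfolding waiting_event_eq prob_step_event_eq
  by (intro sum.cong) (simp_all add: sum_trans_prob waiting_path_interior)

lemma prob_up_event:
  "prob (up_event t m) = (\<Sum>xs\<in>waiting_paths t m. path_weight (t + m) xs * up_prob (xs (t + m)))"
  unfolding prob_step_event_eq up_prob_def by simp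

lemma prob_down_event:
  "prob (down_event t m) = (\<Sum>xs\<in>waiting_paths t m. path_weight (t + m) xs * down_prob (xs (t + m)))"
  unfolding prob_step_event_eq down_prob_def by simp

lemma prob_waiting_event_Suc:
  "prob (waiting_event t (Suc m)) = (\<Sum>xs\<in>waiting_paths t m. path_weight (t + m) xs * stay_prob (xs (t + m)))"
  unfolding waiting_event_Suc_eq prob_step_event_eq stay_prob_def by (simp add: eq_commute)

lemma prob_waiting_event_split:
  "prob (waiting_event t m) = prob (up_event t m) + prob (down_event t m) + prob (waiting_event t (Suc m))"
proof -
  have "prob (waiting_event t m) = (\<Sum>xs\<in>waiting_paths t m. path_weight (t + m) xs *
      (up_prob (xs (t + m)) + down_prob (xs (t + m)) + stay_prob (xs (t + m))))"
    unfolding prob_waiting_event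
    by (intro sum.cong refl)
      (metis up_down_stay_prob waiting_path_interior(1,2) mult_1_right)
  also have "\<dots> = prob (up_event t m) + prob (down_event t m) + prob (waiting_event t (Suc m))"
    unfolding prob_up_event prob_down_event prob_waiting_event_Suc
    by (simp add: distrib_left sum.distrib)
  finally show ?thesis .
qed


lemma prob_down_event_le: "p 1 * prob (down_event t m) \<le> p 2 * prob (up_event t m)"
proof -
  have "p 1 * prob (down_event t m)
      = (\<Sum>xs\<in>waiting_paths t m. path_weight (t + m) xs * (p 1 * down_prob (xs (t + m))))"
    unfolding prob_down_event by (simp add: sum_distrib_left mult.left_commute)
  also have "\<dots> \<le> (\<Sum>xs\<in>waiting_paths t m. path_weight (t + m) xs * (p 2 * up_prob (xs (t + m))))"
    using down_prob_ratio waiting_path_interior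
    by (intro sum_mono mult_left_mono path_weight_nonneg) auto
  also have "\<dots> = p 2 * prob (up_event t m)"
    unfolding prob_up_event by (simp add: sum_distrib_left mult.left_commute)
  finally show ?thesis .
qed

lemma prob_waiting_event_Suc_le:
  "prob (waiting_event t (Suc m)) \<le> (1 - min_up_prob) * prob (waiting_event t m)"
proof -
  have "stay_prob (xs (t + m)) \<le> 1 - min_up_prob" if "xs \<in> waiting_paths t m" for xs
    using up_down_stay_prob[of "xs (t + m)"] min_up_prob_le[of "xs (t + m)"]
      down_prob_nonneg[of "xs (t + m)"] waiting_path_interior[OF that]
    by linarith
  then have "prob (waiting_event t (Suc m))
      \<le> (\<Sum>xs\<in>waiting_paths t m. path_weight (t + m) xs * (1 - min_up_prob))"
    unfolding prob_waiting_event_Suc by (intro sum_mono mult_left_mono path_weight_nonneg)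
  also have "\<dots> = (1 - min_up_prob) * prob (waiting_event t m)"
    unfolding prob_waiting_event by (simp add: sum_distrib_left mult.commute)
  finally show ?thesis .
qed

lemma prob_waiting_event_LIMSEQ: "(\<lambda>m. prob (waiting_event t m)) \<longlonglongrightarrow> 0"
proof -
  have decay: "prob (waiting_event t m) \<le> (1 - min_up_prob) ^ m * prob (waiting_event t 0)" for m
  proof (induction m)
    case (Suc m)
    have "prob (waiting_event t (Suc m)) \<le> (1 - min_up_prob) * prob (waiting_event t m)"
      by (rule prob_waiting_event_Suc_le)
    also have "\<dots> \<le> (1 - min_up_prob) * ((1 - min_up_prob) ^ m * prob (waiting_event t 0))"
      using Suc.IH min_up_prob_le_1 by (intro mult_left_mono) auto
    finally show ?case by (simp add: mult.assoc)
  qed simp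
  have "(\<lambda>m. (1 - min_up_prob) ^ m) \<longlonglongrightarrow> 0"
    using min_up_prob_pos min_up_prob_le_1 by (intro LIMSEQ_power_zero) auto
  then have "(\<lambda>m. (1 - min_up_prob) ^ m * prob (waiting_event t 0)) \<longlonglongrightarrow> 0"
    by (rule tendsto_mult_left_zero)
  then show ?thesis
  proof (rule tendsto_sandwich[where f = "\<lambda>_. 0", rotated 3])
    show "\<forall>\<^sub>F m in sequentially. 0 \<le> prob (waiting_event t m)" by simp
    show "\<forall>\<^sub>F m in sequentially. prob (waiting_event t m) \<le> (1 - min_up_prob) ^ m * prob (waiting_event t 0)"
      using decay by (simp add: always_eventually)
  qed simp
qed

lemma up_down_sums: "(\<lambda>m. prob (up_event t m) + prob (down_event t m)) sums prob (waiting_event t 0)"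
proof -
  have telescope: "(\<Sum>m<n. prob (up_event t m) + prob (down_event t m))
      = prob (waiting_event t 0) - prob (waiting_event t n)" for n
  proof (induction n)
    case (Suc n)
    then show ?case using prob_waiting_event_split[of t n] by simp
  qed simp
  have "(\<lambda>n. prob (waiting_event t 0) - prob (waiting_event t n)) \<longlonglongrightarrow> prob (waiting_event t 0) - 0"
    by (intro tendsto_diff tendsto_const prob_waiting_event_LIMSEQ)
  then show ?thesis unfolding sums_def telescope by simp
qed

definition jump_event_at :: "nat \<Rightarrow> (nat \<Rightarrow> nat \<Rightarrow> bool) \<Rightarrow> 'w set" where
  "jump_event_at t R = (\<Union>m. step_event t m R)"

definition jump_event :: "(nat \<Rightarrow> nat \<Rightarrow> bool) \<Rightarrow> 'w set" where
  "jump_event R = (\<Union>t. jump_event_at t R)"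

definition interior_event :: "'w set" where
  "interior_event = (\<Union>t. waiting_event t 0)"

lemma disjoint_family_step_event:
  assumes moves: "\<And>a b. 0 < a \<Longrightarrow> R a b \<Longrightarrow> b \<noteq> a"
  shows "disjoint_family (\<lambda>m. step_event t m R)"
proof -
  have "m' \<le> m" if "\<omega> \<in> step_event t m R" "\<omega> \<in> step_event t m' R" for \<omega> m m'
  proof -
    have W: "waiting N k t m (\<lambda>l. X l \<omega>)" and W': "waiting N k t m' (\<lambda>l. X l \<omega>)"
      and R: "R (X (t + m) \<omega> 1) (X (Suc (t + m)) \<omega> 1)"
      using that unfolding step_event_def by blast+
    have "X (t + m) \<omega> 1 = X t \<omega> 1" using waiting_value[OF W, of "t + m"] by simp
    moreover have "X t \<omega> 1 \<noteq> 0" using W unfolding waiting_def by blast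
    ultimately have "X (Suc (t + m)) \<omega> 1 \<noteq> X (t + m) \<omega> 1" using moves R by simp
    then show ?thesis using waiting_le_first_change[OF W _ W'] by simp
  qed
  then show ?thesis unfolding disjoint_family_on_def by (meson disjoint_iff le_antisym)
qed

lemma disjoint_family_waiting_start:
  assumes "\<And>t \<omega>. \<omega> \<in> A t \<Longrightarrow> \<exists>m. waiting N k t m (\<lambda>l. X l \<omega>)"
  shows "disjoint_family A"
  unfolding disjoint_family_on_def using assms waiting_start_unique by (meson disjoint_iff)

lemma step_event_sums:
  assumes "\<And>a b. 0 < a \<Longrightarrow> R a b \<Longrightarrow> b \<noteq> a"
  shows "(\<lambda>m. prob (step_event t m R)) sums prob (jump_event_at t R)"
  unfolding jump_event_at_def
  using step_event_sets disjoint_family_step_event[OF assms] by (intro finite_measure_UNION) auto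

lemma jump_event_sums: "(\<lambda>t. prob (jump_event_at t R)) sums prob (jump_event R)"
proof -
  have "disjoint_family (\<lambda>t. jump_event_at t R)"
    by (rule disjoint_family_waiting_start) (auto simp: jump_event_at_def step_event_def)
  moreover have "jump_event_at t R \<in> events" for t
    unfolding jump_event_at_def using step_event_sets by blast
  ultimately show ?thesis unfolding jump_event_def by (intro finite_measure_UNION) auto
qed

lemma interior_event_sums: "(\<lambda>t. prob (waiting_event t 0)) sums prob interior_event"
proof -
  have "disjoint_family (\<lambda>t. waiting_event t 0)"
    by (rule disjoint_family_waiting_start) (auto simp: waiting_event_def)
  moreover have "waiting_event t 0 \<in> events" for t
    unfolding waiting_event_eq by (rule step_event_sets)
  ultimately show ?thesis unfolding interior_event_def by (intro finite_measure_UNION) auto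
qed

lemma jump_event_up_down_eq:
  "prob (jump_event_at t up_step) + prob (jump_event_at t down_step) = prob (waiting_event t 0)"
proof -
  have "(\<lambda>m. prob (up_event t m)) sums prob (jump_event_at t up_step)"
    by (rule step_event_sums) simp
  moreover have "(\<lambda>m. prob (down_event t m)) sums prob (jump_event_at t down_step)"
    by (rule step_event_sums) simp
  ultimately have "(\<lambda>m. prob (up_event t m) + prob (down_event t m))
      sums (prob (jump_event_at t up_step) + prob (jump_event_at t down_step))"
    by (rule sums_add)
  then show ?thesis using up_down_sums sums_unique2 by blast
qed

lemma prob_jump_event_up_down:
  "prob (jump_event up_step) + prob (jump_event down_step) = prob interior_event"
proof -
  have "(\<lambda>t. prob (jump_event_at t up_step) + prob (jump_event_at t down_step))
      sums (prob (jump_event up_step) + prob (jump_event down_step))"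
    by (intro sums_add jump_event_sums)
  then show ?thesis unfolding jump_event_up_down_eq using interior_event_sums sums_unique2 by blast
qed

lemma prob_jump_event_down_le: "p 1 * prob (jump_event down_step) \<le> p 2 * prob (jump_event up_step)"
proof -
  have "p 1 * prob (jump_event_at t down_step) \<le> p 2 * prob (jump_event_at t up_step)" for t
    by (rule sums_le[OF prob_down_event_le sums_mult sums_mult]; rule step_event_sums) simp_all
  moreover have "(\<lambda>t. p 1 * prob (jump_event_at t down_step)) sums (p 1 * prob (jump_event down_step))"
    "(\<lambda>t. p 2 * prob (jump_event_at t up_step)) sums (p 2 * prob (jump_event up_step))"
    by (intro sums_mult jump_event_sums)+
  ultimately show ?thesis by (rule sums_le)
qed


lemma interior_event_eq:
  "{\<omega> \<in> space M. \<exists>w. Wproc (\<lambda>l. X l \<omega>) k = Some w \<and> w \<noteq> 0 \<and> w \<noteq> N} = interior_event"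
proof -
  have "\<omega> \<in> interior_event \<longleftrightarrow> \<omega> \<in> space M \<and> (\<exists>t. waiting N k t 0 (\<lambda>l. X l \<omega>))" for \<omega>
    by (simp add: interior_event_def waiting_event_def)
  then show ?thesis using Wproc_interior_iff[where N = N and k = k] by (intro set_eqI) simp
qed

lemma jump_event_eq:
  assumes "\<And>w. w \<noteq> 0 \<Longrightarrow> f w \<noteq> w"
  shows "{\<omega> \<in> space M. \<exists>w. Wproc (\<lambda>l. X l \<omega>) k = Some w \<and> w \<noteq> 0 \<and> w \<noteq> N
      \<and> Wproc (\<lambda>l. X l \<omega>) (Suc k) = Some (f w)} = jump_event (\<lambda>a b. b = f a)"
proof -
  have "\<omega> \<in> jump_event (\<lambda>a b. b = f a) \<longleftrightarrow> \<omega> \<in> space M \<and>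
      (\<exists>t m. waiting N k t m (\<lambda>l. X l \<omega>) \<and> X (Suc (t + m)) \<omega> 1 = f (X (t + m) \<omega> 1))" for \<omega>
    by (auto simp: jump_event_def jump_event_at_def step_event_def)
  then show ?thesis using Wproc_next_iff[OF assms, where N = N and k = k] by (intro set_eqI) simp
qed

end

theorem lemma1:
  fixes N K :: nat and lam mu :: real and p :: "nat \<Rightarrow> real"
    and M :: "'w measure" and X :: "nat \<Rightarrow> 'w \<Rightarrow> (nat \<Rightarrow> nat)" and k :: nat
  assumes K2: "2 \<le> K"
    and p1: "p 1 \<le> 1" and p12: "p 2 < p 1"
    and pmono: "\<forall>i j. 2 \<le> i \<longrightarrow> i \<le> j \<longrightarrow> j \<le> K \<longrightarrow> p j \<le> p i"
    and pK: "0 \<le> p K"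
    and lam: "0 < lam" and mu: "0 < mu" "mu \<le> 1"
    and P: "prob_space M"
    and Xmeas: "\<forall>n. X n \<in> measurable M (count_space UNIV)"
    and Xlaw: "\<forall>n (xs :: nat \<Rightarrow> nat \<Rightarrow> nat).
       measure M {\<omega> \<in> space M. \<forall>i\<le>n. X i \<omega> = xs i}
       = (if xs 0 = init_state N then 1 else 0)
         * (\<Prod>i<n. jump_prob N K lam mu p (xs i) (xs (Suc i)))"
  shows "measure M {\<omega> \<in> space M. \<exists>w. Wproc (\<lambda>l. X l \<omega>) k = Some w \<and> w \<noteq> 0 \<and> w \<noteq> N
              \<and> Wproc (\<lambda>l. X l \<omega>) (Suc k) = Some (w + 1)}
         \<ge> p 1 / (p 1 + p 2) *
           measure M {\<omega> \<in> space M. \<exists>w. Wproc (\<lambda>l. X l \<omega>) k = Some w \<and> w \<noteq> 0 \<and> w \<noteq> N}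
       \<and> measure M {\<omega> \<in> space M. \<exists>w. Wproc (\<lambda>l. X l \<omega>) k = Some w \<and> w \<noteq> 0 \<and> w \<noteq> N
              \<and> Wproc (\<lambda>l. X l \<omega>) (Suc k) = Some (w + 1)}
         + measure M {\<omega> \<in> space M. \<exists>w. Wproc (\<lambda>l. X l \<omega>) k = Some w \<and> w \<noteq> 0 \<and> w \<noteq> N
              \<and> Wproc (\<lambda>l. X l \<omega>) (Suc k) = Some (w - 1)}
         = measure M {\<omega> \<in> space M. \<exists>w. Wproc (\<lambda>l. X l \<omega>) k = Some w \<and> w \<noteq> 0 \<and> w \<noteq> N}"
proof -
  interpret learning_chain N K lam mu p M X k
    unfolding learning_chain_def learning_chain_axioms_def learning_model_def
    using K2 p12 pmono pK lam mu P Xmeas Xlaw by blast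
  have up: "jump_event up_step = {\<omega> \<in> space M. \<exists>w. Wproc (\<lambda>l. X l \<omega>) k = Some w \<and> w \<noteq> 0 \<and> w \<noteq> N
      \<and> Wproc (\<lambda>l. X l \<omega>) (Suc k) = Some (w + 1)}"
    by (rule jump_event_eq[symmetric]) simp
  have down: "jump_event down_step = {\<omega> \<in> space M. \<exists>w. Wproc (\<lambda>l. X l \<omega>) k = Some w \<and> w \<noteq> 0 \<and> w \<noteq> N
      \<and> Wproc (\<lambda>l. X l \<omega>) (Suc k) = Some (w - 1)}"
    by (rule jump_event_eq[symmetric]) simp
  let ?U = "prob (jump_event up_step)" and ?D = "prob (jump_event down_step)"
  have "p 1 * (?U + ?D) \<le> (p 1 + p 2) * ?U"
    using prob_jump_event_down_le by (simp add: algebra_simps)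
  then have "p 1 / (p 1 + p 2) * (?U + ?D) \<le> ?U"
    using p1_pos p2_nonneg by (simp add: field_simps)
  then show ?thesis
    using prob_jump_event_up_down unfolding up down interior_event_eq[symmetric] by simp
qed

end
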